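(* Let $0\le N_n\le n$ be integers with $N_n/n\to1$ and $D_n=n-N_n\to\infty$. Let $R_n=n/D_n$ and define, for $0\le k\le D_n$, $$\tilde f_{k,n}=\frac{(k+N_n)!\,D_n!}{k!\,n!}\,R_n^{\,D_n-k}.$$ Let $\log\tilde f(t)=t-1-t\log t$ for $0\le t\le1$. Then $$\lim_{n\to\infty}\sup_{0\le k\le D_n}\Big|\frac{1}{D_n}\log\tilde f_{k,n}-\log\tilde f\big(\tfrac{k}{D_n}\big)\Big|=0.$$
   Context: $0\log0=0$. *)

theory Defs
  imports "HOL-Analysis.Analysis"
begin

text \<open>Convention: 0 log 0 = 0. In Isabelle ln 0 = 0, so t * ln t = 0 at t = 0 automatically.\<close>
definition logftilde :: "real \<Rightarrow> real" where
  "logftilde t = t - 1 - t * ln t"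

definition ftilde :: "nat \<Rightarrow> nat \<Rightarrow> nat \<Rightarrow> real" where
  "ftilde N n k = (let D = n - N; R = real n / real D in
      fact (k + N) * fact D / (fact k * fact n) * R ^ (D - k))"

end

theory Submission
  imports Defs "HOL-Real_Asymp.Real_Asymp"
begin

text \<open>Write ln m! = m ln m - m + r(m); an elementary Stirling bound gives 0 \<le> r(m) \<le> 1 + ln (m + 1).
With D = n - N, the logarithm of tilde f_{k,n} then equals D logftilde(k/D) + P + r(D) - r(k), where
P = ln (k+N)! - ln n! + (D-k) ln n lies between 0 and D (ln n - ln (N+1)), because n!/(k+N)! is a
product of D - k factors between N + 1 and n. After dividing by D the error is at most
O(ln D / D) + ln (n/(N+1)) uniformly in k, and both terms tend to 0.\<close>

lemma fact_add_bounds: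
  "fact a * (of_nat a + 1) ^ d \<le> (fact (a + d) :: 'a :: linordered_semidom)
   \<and> fact (a + d) \<le> fact a * (of_nat (a + d) :: 'a) ^ d"
proof (induction d)
  case 0
  show ?case by simp
next
  case (Suc d)
  have "fact a * (of_nat a + 1) ^ Suc d \<le> (of_nat (a + d) + 1) * (fact a * (of_nat a + 1) ^ d :: 'a)"
    by (simp add: mult.left_commute mult_left_mono mult_right_mono)
  also have "\<dots> \<le> (of_nat (a + d) + 1) * fact (a + d)"
    using Suc.IH by (intro mult_left_mono) auto
  also have "\<dots> = fact (a + Suc d)"
    by (simp add: add.commute)
  finally have lower: "fact a * (of_nat a + 1) ^ Suc d \<le> (fact (a + Suc d) :: 'a)" .
  have "fact (a + Suc d) \<le> of_nat (a + Suc d) * (fact a * (of_nat (a + d) :: 'a) ^ d)"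
    using Suc.IH by (simp add: mult_left_mono)
  also have "\<dots> \<le> fact a * of_nat (a + Suc d) ^ Suc d"
    by (simp add: mult.left_commute mult_left_mono power_mono)
  finally show ?case using lower by simp
qed

lemma ln_Suc_diff_bounds:
  fixes x :: real
  assumes "x > 0"
  shows "1 / (x + 1) \<le> ln (x + 1) - ln x" and "ln (x + 1) - ln x \<le> 1 / x"
proof -
  have "ln (x / (x + 1)) \<le> x / (x + 1) - 1"
    using assms by (intro ln_le_minus_one) auto
  then show "1 / (x + 1) \<le> ln (x + 1) - ln x"
    using assms by (simp add: ln_div field_simps)
  have "ln ((x + 1) / x) \<le> (x + 1) / x - 1"
    using assms by (intro ln_le_minus_one) auto
  then show "ln (x + 1) - ln x \<le> 1 / x"
    using assms by (simp add: ln_div field_simps)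
qed

definition stirling_remainder :: "nat \<Rightarrow> real" where
  "stirling_remainder m = ln (fact m) - (real m * ln (real m) - real m)"

lemma stirling_remainder_Suc:
  "stirling_remainder (Suc m) = stirling_remainder m + 1 - real m * (ln (real m + 1) - ln (real m))"
proof -
  have "ln (fact (Suc m) :: real) = ln (real m + 1) + ln (fact m)"
    by (simp add: ln_mult add.commute)
  then show ?thesis unfolding stirling_remainder_def by (simp add: algebra_simps)
qed

lemma stirling_remainder_Suc_bounds:
  "1 \<le> stirling_remainder (Suc m) \<and> stirling_remainder (Suc m) \<le> 1 + ln (real (Suc m))"
proof (induction m)
  case 0
  show ?case by (simp add: stirling_remainder_def)
next
  case (Suc m)
  define x where "x = real (Suc m)"
  have "x > 0" unfolding x_def by simp
  have "x * (ln (x + 1) - ln x) \<le> 1" "1 \<le> (x + 1) * (ln (x + 1) - ln x)"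
    using ln_Suc_diff_bounds[OF \<open>x > 0\<close>] \<open>x > 0\<close> by (auto simp: field_simps)
  \<comment> \<open>Hence the increment 1 - x (ln (x + 1) - ln x) lies between 0 and ln (x + 1) - ln x\<close>
  moreover have "real (Suc (Suc m)) = x + 1" unfolding x_def by simp
  ultimately show ?case
    using Suc.IH stirling_remainder_Suc[of "Suc m"] unfolding x_def[symmetric] by (simp add: algebra_simps)
qed

lemma stirling_remainder_bounds:
  "0 \<le> stirling_remainder m" "stirling_remainder m \<le> 1 + ln (real m + 1)"
proof -
  have "0 \<le> stirling_remainder m \<and> stirling_remainder m \<le> 1 + ln (real m)"
    using stirling_remainder_Suc_bounds[of "m - 1"]
    by (cases m) (simp_all add: stirling_remainder_def)
  moreover have "ln (real m) \<le> ln (real m + 1)"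
    by (cases "m = 0") simp_all
  ultimately show "0 \<le> stirling_remainder m" "stirling_remainder m \<le> 1 + ln (real m + 1)"
    by linarith+
qed

lemma ln_fact_add_bounds:
  "0 \<le> ln (fact a) + real d * ln (real (a + d)) - ln (fact (a + d))
   \<and> ln (fact a) + real d * ln (real (a + d)) - ln (fact (a + d))
       \<le> real d * (ln (real (a + d)) - ln (real a + 1))"
proof -
  have lower: "ln (fact a * (real a + 1) ^ d) \<le> ln (fact (a + d))"
    and upper: "ln (fact (a + d)) \<le> ln (fact a * real (a + d) ^ d)" if "a + d > 0"
    using fact_add_bounds[of a d] that by (auto simp del: of_nat_add)
  show ?thesis
  proof (cases "a + d = 0")
    case True
    then show ?thesis by simp
  next
    case False
    with lower upper show ?thesis by (simp add: ln_mult ln_realpow algebra_simps)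
  qed
qed

lemma logftilde_scaled:
  fixes k D :: real
  assumes "k \<ge> 0" "D > 0"
  shows "D * logftilde (k / D) = k - D - k * (ln k - ln D)"
proof (cases "k = 0")
  case True
  then show ?thesis by (simp add: logftilde_def)
next
  case False
  with assms show ?thesis by (simp add: logftilde_def ln_div field_simps)
qed

lemma ln_ftilde_eq:
  assumes "n = N + D" "k \<le> D" "D > 0"
  shows "ln (ftilde N n k) = real D * logftilde (real k / real D)
           + (ln (fact (k + N)) + real (D - k) * ln (real n) - ln (fact n))
           + stirling_remainder D - stirling_remainder k"
proof -
  have "ftilde N n k = fact (k + N) * fact D / (fact k * fact n) * (real n / real D) ^ (D - k)"
    unfolding ftilde_def using assms(1) by simp
  then have "ln (ftilde N n k) = ln (fact (k + N)) + ln (fact D) - ln (fact k) - ln (fact n)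
               + real (D - k) * (ln (real n) - ln (real D))"
    using assms by (simp add: ln_mult ln_div ln_realpow)
  then show ?thesis
    using logftilde_scaled[of "real k" "real D"] assms(2,3)
    by (simp add: stirling_remainder_def of_nat_diff algebra_simps)
qed

lemma ftilde_uniform_estimate:
  assumes "N < n" "k \<le> n - N"
  shows "\<bar>ln (ftilde N n k) / real (n - N) - logftilde (real k / real (n - N))\<bar>
         \<le> 2 * (1 + ln (real (n - N) + 1)) / real (n - N) + (ln (real n) - ln (real N + 1))"
proof -
  define D where "D = n - N"
  have D: "n = N + D" "k \<le> D" "D > 0" using assms unfolding D_def by auto
  define P where "P = ln (fact (k + N)) + real (D - k) * ln (real n) - ln (fact n)"
  have "0 \<le> P \<and> P \<le> real (D - k) * (ln (real n) - ln (real (k + N) + 1))"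
    using ln_fact_add_bounds[of "k + N" "D - k"] D(1,2) unfolding P_def by simp
  moreover have "real (D - k) * (ln (real n) - ln (real (k + N) + 1))
                   \<le> real (D - k) * (ln (real n) - ln (real N + 1))"
    by (intro mult_left_mono) auto
  moreover have "\<dots> \<le> real D * (ln (real n) - ln (real N + 1))"
    using D by (intro mult_right_mono) auto
  ultimately have P: "0 \<le> P" "P \<le> real D * (ln (real n) - ln (real N + 1))" by auto
  have "ln (real k + 1) \<le> ln (real D + 1)" using D by simp
  then have "stirling_remainder k \<le> 1 + ln (real D + 1)"
    using stirling_remainder_bounds(2)[of k] by linarith
  then have bound: "\<bar>P + stirling_remainder D - stirling_remainder k\<bar>
               \<le> 2 * (1 + ln (real D + 1)) + real D * (ln (real n) - ln (real N + 1))"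
    using P stirling_remainder_bounds[of D] stirling_remainder_bounds(1)[of k]
    by (simp add: abs_le_iff)
  have "ln (ftilde N n k) / real D - logftilde (real k / real D)
          = (P + stirling_remainder D - stirling_remainder k) / real D"
    using ln_ftilde_eq[OF D] D(3) unfolding P_def by (simp add: field_simps)
  then have "\<bar>ln (ftilde N n k) / real D - logftilde (real k / real D)\<bar>
               = \<bar>P + stirling_remainder D - stirling_remainder k\<bar> / real D"
    by simp
  also have "\<dots> \<le> (2 * (1 + ln (real D + 1)) + real D * (ln (real n) - ln (real N + 1))) / real D"
    using bound by (simp add: divide_right_mono)
  also have "\<dots> = 2 * (1 + ln (real D + 1)) / real D + (ln (real n) - ln (real N + 1))"
    using D(3) by (simp add: field_simps)
  finally show ?thesis unfolding D_def .
qed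

lemma ftilde_error_bound_tendsto_zero:
  fixes N :: "nat \<Rightarrow> nat"
  assumes "(\<lambda>n. real (N n) / real n) \<longlonglongrightarrow> 1"
    and "filterlim (\<lambda>n. n - N n) at_top sequentially"
  shows "(\<lambda>n. 2 * (1 + ln (real (n - N n) + 1)) / real (n - N n)
              + (ln (real n) - ln (real (N n) + 1))) \<longlonglongrightarrow> 0"
proof -
  have "((\<lambda>x::real. 2 * (1 + ln (x + 1)) / x) \<longlongrightarrow> 0) at_top"
    by real_asymp
  moreover have "filterlim (\<lambda>n. real (n - N n)) at_top sequentially"
    using filterlim_compose[OF filterlim_real_sequentially assms(2)] .
  ultimately have stirling_part: "(\<lambda>n. 2 * (1 + ln (real (n - N n) + 1)) / real (n - N n)) \<longlonglongrightarrow> 0"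
    by (rule filterlim_compose)
  have "(\<lambda>n. - ln (real (N n) / real n + 1 / real n)) \<longlonglongrightarrow> - ln (1 + 0)"
    by (intro tendsto_intros assms(1) lim_const_over_n) simp
  moreover have "\<forall>\<^sub>F n in sequentially.
      - ln (real (N n) / real n + 1 / real n) = ln (real n) - ln (real (N n) + 1)"
    using eventually_gt_at_top[of 0]
    by eventually_elim (simp add: add_divide_distrib[symmetric] ln_div)
  ultimately have ratio_part: "(\<lambda>n. ln (real n) - ln (real (N n) + 1)) \<longlonglongrightarrow> 0"
    by (simp add: tendsto_cong)
  show ?thesis
    using tendsto_add[OF stirling_part ratio_part] by simp
qed

theorem mainTheorem10:
  fixes N :: "nat \<Rightarrow> nat"
  assumes "\<And>n. N n \<le> n"
    and "(\<lambda>n. real (N n) / real n) \<longlonglongrightarrow> 1"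
    and "filterlim (\<lambda>n. n - N n) at_top sequentially"
  shows "(\<lambda>n. Max ((\<lambda>k. \<bar>ln (ftilde (N n) n k) / real (n - N n)
                          - logftilde (real k / real (n - N n))\<bar>) ` {0..n - N n}))
           \<longlonglongrightarrow> 0"
proof -
  let ?M = "\<lambda>n. Max ((\<lambda>k. \<bar>ln (ftilde (N n) n k) / real (n - N n)
                          - logftilde (real k / real (n - N n))\<bar>) ` {0..n - N n})"
  let ?bound = "\<lambda>n. 2 * (1 + ln (real (n - N n) + 1)) / real (n - N n)
                     + (ln (real n) - ln (real (N n) + 1))"
  have "\<forall>\<^sub>F n in sequentially. 0 \<le> ?M n"
    by (intro always_eventually allI order.trans[OF abs_ge_zero Max_ge]) auto
  moreover have "\<forall>\<^sub>F n in sequentially. 0 < n - N n"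
    using eventually_compose_filterlim[OF eventually_gt_at_top assms(3)] .
  then have "\<forall>\<^sub>F n in sequentially. ?M n \<le> ?bound n"
  proof eventually_elim
    case (elim n)
    then show ?case
      using ftilde_uniform_estimate[of "N n" n] by (subst Max_le_iff) auto
  qed
  ultimately show ?thesis
    by (rule tendsto_sandwich[OF _ _ tendsto_const ftilde_error_bound_tendsto_zero[OF assms(2,3)]])
qed

end
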